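(* With the setting in the context, for all $s\in\mathrm{hom}(C,G)_{-1}$ and $v\in\mathrm{hom}(C,G)^1$, $$\sum_{t\in\mathrm{hom}(C,G)^{-1}}\chi_s(t)A_t=\prod_n\prod_{x\in K_n}\sum_{g\in G_{n+1}}\chi_s(gx^* )A_{gx^*},\qquad \sum_{m\in\mathrm{hom}(C,G)_1}\chi_m(v)B_m=\prod_n\prod_{x\in K_n}\sum_{r\in\widehat{G}_{n-1}}\chi_{rx_*}(v)B_{rx_*}.$$
   Context: $(C_\bullet,\partial^C_\bullet)$ is a chain complex with each $C_n$ free abelian on a finite set $K_n$, $K_n\ne\emptyset$ for finitely many $n$; $(G_\bullet,\partial^G_\bullet)$ is a chain complex of finite abelian groups, $\widehat{G}_k=\mathrm{Hom}(G_k,U(1))$. $\mathrm{hom}(C,G)^p=\prod_n\mathrm{Hom}(C_n,G_{n-p})$ with $(\delta^pf)_n=f_{n-1}\partial^C_n-(-1)^p\partial^G_{n-p}f_n$. $\mathrm{hom}(C,G)_p=\mathrm{Hom}(\mathrm{hom}(C,G)^p,U(1))$ (written additively), $\chi_m(f)=m(f)$, $\delta_1m=m\circ\delta^0$. $\mathcal H=\bigotimes_n\bigotimes_{x\in K_n}\mathbb C[G_n]$ with orthonormal basis $|f\rangle$, $f\in\mathrm{hom}(C,G)^0$; $P_t|f\rangle=|f+t\rangle$, $Q_m|f\rangle=\chi_m(f)|f\rangle$; $A_t=P_{\delta^{-1}t}$ ($t\in\mathrm{hom}(C,G)^{-1}$), $B_m=Q_{\delta_1m}$ ($m\in\mathrm{hom}(C,G)_1$).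 For $x\in K_n$, $g\in G_{n-p}$, $gx^*\in\mathrm{hom}(C,G)^p$ has $n$-th component sending $x\mapsto g$ and other elements of $K_n$ to $0$, other components $0$; for $r\in\widehat G_{n-p}$, $rx_*\in\mathrm{hom}(C,G)_p$ is $rx_*(f)=r(f_n(x))$. *)

theory Defs
  imports Complex_Main
begin

text \<open>
  Chain complex C: C_n is free abelian on the finite set K n; the boundary
  is given by its integer matrix dC n x y = coefficient of y (in K (n-1)) in
  the boundary of x (in K n).
  Chain complex G: each G k is a finite subgroup of a common abelian group
  type 'g; dG k is the boundary G k to G (k-1).
  Elements of hom(C,G)^p are functions f n x, with f n x in G (n-p) for
  x in K n (Hom(C_n, G_(n-p)) = maps K n to G (n-p), by freeness), and
  f n x = 0 for x not in K n (extensionality).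
  U(1) is the complex unit circle, written multiplicatively.
\<close>

type_synonym ('k,'g) cochain = "int \<Rightarrow> 'k \<Rightarrow> 'g"
type_synonym ('k,'g) vec = "('k,'g) cochain \<Rightarrow> complex"
type_synonym ('k,'g) op = "('k,'g) vec \<Rightarrow> ('k,'g) vec"

definition zsmult :: "int \<Rightarrow> 'a::ab_group_add \<Rightarrow> 'a" where
  "zsmult k g = (\<Sum>i<nat k. g) - (\<Sum>i<nat (- k). g)"

definition setting ::
  "(int \<Rightarrow> 'k set) \<Rightarrow> (int \<Rightarrow> 'k \<Rightarrow> 'k \<Rightarrow> int) \<Rightarrow>
   (int \<Rightarrow> 'g::ab_group_add set) \<Rightarrow> (int \<Rightarrow> 'g \<Rightarrow> 'g) \<Rightarrow> bool" where
  "setting K dC G dG \<longleftrightarrow>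
     (\<forall>n. finite (K n)) \<and> finite {n. K n \<noteq> {}} \<and>
     (\<forall>n x z. x \<in> K n \<longrightarrow> z \<in> K (n - 2) \<longrightarrow>
        (\<Sum>y\<in>K (n - 1). dC n x y * dC (n - 1) y z) = 0) \<and>
     (\<forall>k. finite (G k) \<and> 0 \<in> G k \<and>
        (\<forall>g\<in>G k. \<forall>h\<in>G k. g + h \<in> G k) \<and> (\<forall>g\<in>G k. - g \<in> G k)) \<and>
     (\<forall>k. \<forall>g\<in>G k. dG k g \<in> G (k - 1)) \<and>
     (\<forall>k. \<forall>g\<in>G k. \<forall>h\<in>G k. dG k (g + h) = dG k g + dG k h) \<and>
     (\<forall>k. \<forall>g\<in>G k. dG (k - 1) (dG k g) = 0)"

definition cochains :: "(int \<Rightarrow> 'k set) \<Rightarrow> (int \<Rightarrow> 'g::zero set) \<Rightarrow> int \<Rightarrow> ('k,'g) cochain set" where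
  "cochains K G p = {f. \<forall>n x. (x \<in> K n \<longrightarrow> f n x \<in> G (n - p)) \<and> (x \<notin> K n \<longrightarrow> f n x = 0)}"

definition cobdry ::
  "(int \<Rightarrow> 'k set) \<Rightarrow> (int \<Rightarrow> 'k \<Rightarrow> 'k \<Rightarrow> int) \<Rightarrow> (int \<Rightarrow> 'g::ab_group_add \<Rightarrow> 'g) \<Rightarrow>
   int \<Rightarrow> ('k,'g) cochain \<Rightarrow> ('k,'g) cochain" where
  "cobdry K dC dG p f = (\<lambda>n x. if x \<in> K n then
      (\<Sum>y\<in>K (n - 1). zsmult (dC n x y) (f (n - 1) y))
        - (if even p then dG (n - p) (f n x) else - dG (n - p) (f n x))
    else 0)"

text \<open>hom(C,G)_p = Hom(hom(C,G)^p, U(1)), characters, extended by 1 outside\<close>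
definition chars :: "(int \<Rightarrow> 'k set) \<Rightarrow> (int \<Rightarrow> 'g::ab_group_add set) \<Rightarrow> int \<Rightarrow>
   (('k,'g) cochain \<Rightarrow> complex) set" where
  "chars K G p = {m. (\<forall>f\<in>cochains K G p. cmod (m f) = 1) \<and>
     (\<forall>f\<in>cochains K G p. \<forall>g\<in>cochains K G p. m (\<lambda>n x. f n x + g n x) = m f * m g) \<and>
     (\<forall>f. f \<notin> cochains K G p \<longrightarrow> m f = 1)}"

definition dual_grp :: "(int \<Rightarrow> 'g::ab_group_add set) \<Rightarrow> int \<Rightarrow> ('g \<Rightarrow> complex) set" where
  "dual_grp G k = {r. (\<forall>g\<in>G k. cmod (r g) = 1) \<and>
     (\<forall>g\<in>G k. \<forall>h\<in>G k. r (g + h) = r g * r h) \<and> (\<forall>g. g \<notin> G k \<longrightarrow> r g = 1)}"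

definition dual_cobdry ::
  "(int \<Rightarrow> 'k set) \<Rightarrow> (int \<Rightarrow> 'k \<Rightarrow> 'k \<Rightarrow> int) \<Rightarrow> (int \<Rightarrow> 'g::ab_group_add set) \<Rightarrow>
   (int \<Rightarrow> 'g \<Rightarrow> 'g) \<Rightarrow> (('k,'g) cochain \<Rightarrow> complex) \<Rightarrow> (('k,'g) cochain \<Rightarrow> complex)" where
  "dual_cobdry K dC G dG m = (\<lambda>f. if f \<in> cochains K G 0 then m (cobdry K dC dG 0 f) else 1)"

text \<open>g x^*  and  r x_*\<close>
definition upper_elem :: "int \<Rightarrow> 'k \<Rightarrow> 'g::zero \<Rightarrow> ('k,'g) cochain" where
  "upper_elem n x g = (\<lambda>n' y. if n' = n \<and> y = x then g else 0)"

definition lower_elem :: "(int \<Rightarrow> 'k set) \<Rightarrow> (int \<Rightarrow> 'g::ab_group_add set) \<Rightarrow> int \<Rightarrow>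
   int \<Rightarrow> 'k \<Rightarrow> ('g \<Rightarrow> complex) \<Rightarrow> (('k,'g) cochain \<Rightarrow> complex)" where
  "lower_elem K G p n x r = (\<lambda>f. if f \<in> cochains K G p then r (f n x) else 1)"

text \<open>The Hilbert space: complex functions on the basis hom(C,G)^0\<close>
definition Hspace :: "(int \<Rightarrow> 'k set) \<Rightarrow> (int \<Rightarrow> 'g::ab_group_add set) \<Rightarrow> ('k,'g) vec set" where
  "Hspace K G = {\<psi>. \<forall>f. f \<notin> cochains K G 0 \<longrightarrow> \<psi> f = 0}"

text \<open>P_t |f> = |f + t>,  Q_m |f> = chi_m(f) |f>\<close>
definition Pop :: "('k,'g::ab_group_add) cochain \<Rightarrow> ('k,'g) op" where
  "Pop t \<psi> = (\<lambda>f. \<psi> (\<lambda>n x. f n x - t n x))"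

definition Qop :: "(('k,'g::ab_group_add) cochain \<Rightarrow> complex) \<Rightarrow> ('k,'g) op" where
  "Qop m \<psi> = (\<lambda>f. m f * \<psi> f)"

definition Aop :: "(int \<Rightarrow> 'k set) \<Rightarrow> (int \<Rightarrow> 'k \<Rightarrow> 'k \<Rightarrow> int) \<Rightarrow> (int \<Rightarrow> 'g::ab_group_add \<Rightarrow> 'g) \<Rightarrow>
   ('k,'g) cochain \<Rightarrow> ('k,'g) op" where
  "Aop K dC dG t = Pop (cobdry K dC dG (-1) t)"

definition Bop :: "(int \<Rightarrow> 'k set) \<Rightarrow> (int \<Rightarrow> 'k \<Rightarrow> 'k \<Rightarrow> int) \<Rightarrow> (int \<Rightarrow> 'g::ab_group_add set) \<Rightarrow>
   (int \<Rightarrow> 'g \<Rightarrow> 'g) \<Rightarrow> (('k,'g) cochain \<Rightarrow> complex) \<Rightarrow> ('k,'g) op" where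
  "Bop K dC G dG m = Qop (dual_cobdry K dC G dG m)"

definition op_sum :: "'i set \<Rightarrow> ('i \<Rightarrow> complex) \<Rightarrow> ('i \<Rightarrow> ('k,'g) op) \<Rightarrow> ('k,'g) op" where
  "op_sum I c Op = (\<lambda>\<psi> f. \<Sum>i\<in>I. c i * Op i \<psi> f)"

definition op_prod :: "'i set \<Rightarrow> ('i \<Rightarrow> ('k,'g) op) \<Rightarrow> ('k,'g) op" where
  "op_prod I Op = Finite_Set.fold (\<lambda>i acc. Op i \<circ> acc) id I"

end

theory Submission imports Defs "HOL-Library.FuncSet" begin

text \<open>
  Both identities express that hom(C,G)^p is the direct sum, over the cells x \<in> K n, of the
  groups G (n - p), the summand of x consisting of the cochains g x^*. Since t \<mapsto> A_t turns
  sums into compositions and \<chi>_s is a character, the sum over all t = \<Sum> g_x x^* is the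
  composition of the sums over the single summands. Dually, the characters of hom(C,G)^1 are
  exactly the products of characters r x_* of the summands, and B_m multiplies |f> by m(\<delta> f);
  so the coefficient \<Sum>_m m(v) m(\<delta> f) is the product over the cells of \<Sum>_r r(v x) r((\<delta> f) x).
\<close>

lemma
  assumes "setting K dC G dG"
  shows setting_finite_K: "finite (K n)"
    and setting_finite_levels: "finite {n. K n \<noteq> {}}"
    and setting_zero_mem: "0 \<in> G k"
    and setting_finite_G: "finite (G k)"
    and setting_add_mem: "g \<in> G k \<Longrightarrow> h \<in> G k \<Longrightarrow> g + h \<in> G k"
    and setting_uminus_mem: "g \<in> G k \<Longrightarrow> - g \<in> G k"
    and setting_dG_mem: "g \<in> G k \<Longrightarrow> dG k g \<in> G (k - 1)"
    and setting_dG_add: "g \<in> G k \<Longrightarrow> h \<in> G k \<Longrightarrow> dG k (g + h) = dG k g + dG k h"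
  using assms unfolding setting_def by auto

lemma setting_dG_zero:
  assumes "setting K dC G dG" shows "dG k 0 = 0"
  using setting_dG_add[OF assms setting_zero_mem[OF assms] setting_zero_mem[OF assms], of k]
  by simp

lemma setting_finite_cells:
  assumes "setting K dC G dG" shows "finite {(n, x). x \<in> K n}"
proof -
  have "{(n, x). x \<in> K n} = Sigma {n. K n \<noteq> {}} K" by auto
  then show ?thesis using assms by (simp add: setting_finite_K setting_finite_levels)
qed

lemma setting_sum_mem:
  assumes "setting K dC G dG" "\<And>i. i \<in> I \<Longrightarrow> f i \<in> G k"
  shows "sum f I \<in> G k"
  using assms(2)
  by (induction I rule: infinite_finite_induct)
     (auto intro: setting_zero_mem[OF assms(1)] setting_add_mem[OF assms(1)])

lemma setting_zsmult_mem:
  assumes "setting K dC G dG" "g \<in> G k"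
  shows "zsmult j g \<in> G k"
proof -
  have "(\<Sum>i<nat j. g) + - (\<Sum>i<nat (- j). g) \<in> G k"
    using assms by (intro setting_add_mem setting_uminus_mem setting_sum_mem)
  then show ?thesis unfolding zsmult_def by simp
qed

lemma zsmult_add: "zsmult k (a + b) = zsmult k a + zsmult k (b::'a::ab_group_add)"
  unfolding zsmult_def by (simp add: sum.distrib algebra_simps)

lemma zsmult_zero: "zsmult k (0::'a::ab_group_add) = 0"
  unfolding zsmult_def by simp

lemma cochainsI:
  "(\<And>n x. x \<in> K n \<Longrightarrow> f n x \<in> G (n - p)) \<Longrightarrow> (\<And>n x. x \<notin> K n \<Longrightarrow> f n x = 0)
   \<Longrightarrow> f \<in> cochains K G p"
  unfolding cochains_def by auto

lemma cochainsD:
  "f \<in> cochains K G p \<Longrightarrow> x \<in> K n \<Longrightarrow> f n x \<in> G (n - p)"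
  "f \<in> cochains K G p \<Longrightarrow> x \<notin> K n \<Longrightarrow> f n x = 0"
  unfolding cochains_def by auto

lemma cochains_add:
  assumes "setting K dC G dG" "a \<in> cochains K G p" "b \<in> cochains K G p"
  shows "(\<lambda>n x. a n x + b n x) \<in> cochains K G p"
  using assms by (intro cochainsI) (auto simp: cochainsD intro: setting_add_mem)

lemma cochains_zero:
  assumes "setting K dC G dG" shows "(\<lambda>n x. 0) \<in> cochains K G p"
  using assms by (auto intro!: cochainsI setting_zero_mem)

lemma cochains_restrict:
  assumes "setting K dC G dG" "f \<in> cochains K G p"
  shows "(\<lambda>n x. if (n, x) \<in> I then f n x else 0) \<in> cochains K G p"
  using assms by (auto intro!: cochainsI setting_zero_mem dest: cochainsD)

lemma upper_elem_mem_cochains: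
  assumes "setting K dC G dG" "x \<in> K n" "g \<in> G (n - p)"
  shows "upper_elem n x g \<in> cochains K G p"
  using assms unfolding upper_elem_def by (auto intro!: cochainsI setting_zero_mem)

lemma upper_elem_add:
  "upper_elem n x (g + h :: 'g::monoid_add) = (\<lambda>n' y. upper_elem n x g n' y + upper_elem n x h n' y)"
  unfolding upper_elem_def by (auto simp: fun_eq_iff)

lemma cobdry_add:
  assumes S: "setting K dC G dG" and a: "a \<in> cochains K G p" and b: "b \<in> cochains K G p"
  shows "cobdry K dC dG p (\<lambda>n x. a n x + b n x)
       = (\<lambda>n x. cobdry K dC dG p a n x + cobdry K dC dG p b n x)"
proof (intro ext)
  fix n x
  show "cobdry K dC dG p (\<lambda>n x. a n x + b n x) n x
      = cobdry K dC dG p a n x + cobdry K dC dG p b n x"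
  proof (cases "x \<in> K n")
    case True
    then have "dG (n - p) (a n x + b n x) = dG (n - p) (a n x) + dG (n - p) (b n x)"
      using a b by (simp add: setting_dG_add[OF S] cochainsD)
    then show ?thesis using True unfolding cobdry_def
      by (cases "even p") (simp_all add: zsmult_add sum.distrib algebra_simps)
  qed (simp add: cobdry_def)
qed

lemma cobdry_zero:
  assumes "setting K dC G dG"
  shows "cobdry K dC dG p (\<lambda>n x. 0) = (\<lambda>n x. 0)"
  unfolding cobdry_def by (intro ext) (simp add: zsmult_zero setting_dG_zero[OF assms])

lemma cobdry_mem_cochains:
  assumes S: "setting K dC G dG" and f: "f \<in> cochains K G 0"
  shows "cobdry K dC dG 0 f \<in> cochains K G 1"
proof (rule cochainsI)
  fix n x assume x: "x \<in> K n"
  have "(\<Sum>y\<in>K (n - 1). zsmult (dC n x y) (f (n - 1) y)) \<in> G (n - 1)"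
    using f by (intro setting_sum_mem[OF S] setting_zsmult_mem[OF S]) (fastforce dest: cochainsD)
  moreover have "dG n (f n x) \<in> G (n - 1)"
    using cochainsD(1)[OF f x] by (simp add: setting_dG_mem[OF S])
  ultimately have "(\<Sum>y\<in>K (n - 1). zsmult (dC n x y) (f (n - 1) y)) + - dG n (f n x) \<in> G (n - 1)"
    by (intro setting_add_mem[OF S] setting_uminus_mem[OF S])
  then show "cobdry K dC dG 0 f n x \<in> G (n - 1)"
    using x unfolding cobdry_def by simp
qed (simp add: cobdry_def)

lemma
  assumes "m \<in> chars K G p"
  shows chars_mult: "a \<in> cochains K G p \<Longrightarrow> b \<in> cochains K G p
                     \<Longrightarrow> m (\<lambda>n x. a n x + b n x) = m a * m b"
    and chars_norm: "a \<in> cochains K G p \<Longrightarrow> cmod (m a) = 1"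
    and chars_outside: "a \<notin> cochains K G p \<Longrightarrow> m a = 1"
  using assms unfolding chars_def by blast+

lemma chars_zero:
  assumes S: "setting K dC G dG" and m: "m \<in> chars K G p"
  shows "m (\<lambda>n x. 0) = 1"
proof -
  have z: "(\<lambda>n x. 0) \<in> cochains K G p" by (rule cochains_zero[OF S])
  have "m (\<lambda>n x. 0 + 0) = m (\<lambda>n x. 0) * m (\<lambda>n x. 0)" by (rule chars_mult[OF m z z])
  moreover have "m (\<lambda>n x. 0) \<noteq> 0" using chars_norm[OF m z] by auto
  ultimately show ?thesis by simp
qed

lemma
  assumes "r \<in> dual_grp G k"
  shows dual_grp_norm: "g \<in> G k \<Longrightarrow> cmod (r g) = 1"
    and dual_grp_mult: "g \<in> G k \<Longrightarrow> h \<in> G k \<Longrightarrow> r (g + h) = r g * r h"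
    and dual_grp_outside: "g \<notin> G k \<Longrightarrow> r g = 1"
  using assms unfolding dual_grp_def by blast+

lemma dual_grp_zero:
  assumes S: "setting K dC G dG" and r: "r \<in> dual_grp G k"
  shows "r 0 = 1"
proof -
  have z: "0 \<in> G k" by (rule setting_zero_mem[OF S])
  have "r (0 + 0) = r 0 * r 0" by (rule dual_grp_mult[OF r z z])
  moreover have "r 0 \<noteq> 0" using dual_grp_norm[OF r z] by auto
  ultimately show ?thesis by simp
qed

lemma dual_grp_sum_const:
  assumes S: "setting K dC G dG" and r: "r \<in> dual_grp G k" and g: "g \<in> G k"
  shows "r (\<Sum>i<(n::nat). g) = r g ^ n"
proof (induction n)
  case 0
  show ?case using dual_grp_zero[OF S r] by simp
next
  case (Suc n)
  have "(\<Sum>i<n. g) \<in> G k" using g by (intro setting_sum_mem[OF S])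
  then show ?case using dual_grp_mult[OF r _ g] Suc by simp
qed

text \<open>Two of the multiples 0, g, ..., |G k| g coincide, by pigeonhole.\<close>
lemma dual_grp_root_of_unity:
  assumes S: "setting K dC G dG" and g: "g \<in> G k"
  shows "\<exists>d\<in>{1..card (G k)}. \<forall>r\<in>dual_grp G k. r g ^ d = 1"
proof -
  let ?N = "card (G k)"
  let ?mult = "\<lambda>i::nat. (\<Sum>j<i. g)"
  have "?mult ` {..?N} \<subseteq> G k" using g by (auto intro: setting_sum_mem[OF S])
  then have "\<not> inj_on ?mult {..?N}"
    using card_inj_on_le[OF _ _ setting_finite_G[OF S]] by fastforce
  then obtain a b where ab: "a < b" "b \<le> ?N" "?mult a = ?mult b"
    unfolding inj_on_def by (metis atMost_iff linorder_neqE_nat)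
  show ?thesis
  proof (intro bexI ballI)
    fix r assume r: "r \<in> dual_grp G k"
    have "r g ^ a = r g ^ a * r g ^ (b - a)"
      using ab dual_grp_sum_const[OF S r g] by (metis le_add_diff_inverse less_imp_le power_add)
    moreover have "r g \<noteq> 0" using dual_grp_norm[OF r g] by auto
    ultimately show "r g ^ (b - a) = 1" by simp
  qed (use ab in auto)
qed

lemma finite_dual_grp:
  assumes S: "setting K dC G dG"
  shows "finite (dual_grp G k)"
proof -
  let ?roots = "\<Union>d\<in>{1..card (G k)}. {z::complex. z ^ d = 1}"
  have "dual_grp G k \<subseteq> {r. \<forall>x. (x \<in> G k \<longrightarrow> r x \<in> ?roots) \<and> (x \<notin> G k \<longrightarrow> r x = 1)}"
  proof (intro subsetI CollectI allI conjI impI)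
    fix r x assume r: "r \<in> dual_grp G k"
    show "x \<in> G k \<Longrightarrow> r x \<in> ?roots" using dual_grp_root_of_unity[OF S, of x] r by blast
    show "x \<notin> G k \<Longrightarrow> r x = 1" by (rule dual_grp_outside[OF r])
  qed
  moreover have "finite ?roots" by (auto intro!: finite_roots_unity)
  ultimately show ?thesis
    by (rule finite_subset[OF _ finite_set_of_finite_funs[OF setting_finite_G[OF S]]])
qed

subsection \<open>Characters of hom(C,G)^p as tuples of characters\<close>

lemma chars_restrict_eq_prod:
  assumes S: "setting K dC G dG" and m: "m \<in> chars K G p" and f: "f \<in> cochains K G p"
    and "finite I" "I \<subseteq> {(n, x). x \<in> K n}"
  shows "m (\<lambda>n x. if (n, x) \<in> I then f n x else 0)
       = (\<Prod>(n, x)\<in>I. m (upper_elem n x (f n x)))"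
  using assms(4,5)
proof (induction I rule: finite_induct)
  case empty
  then show ?case using chars_zero[OF S m] by simp
next
  case (insert j I)
  obtain n0 x0 where j: "j = (n0, x0)" by (cases j)
  have "x0 \<in> K n0" using insert.prems j by auto
  then have u: "upper_elem n0 x0 (f n0 x0) \<in> cochains K G p"
    using f by (intro upper_elem_mem_cochains[OF S]) (auto dest: cochainsD)
  have "(\<lambda>n x. if (n, x) \<in> insert j I then f n x else 0)
     = (\<lambda>n x. (if (n, x) \<in> I then f n x else 0) + upper_elem n0 x0 (f n0 x0) n x)"
    using insert.hyps j unfolding upper_elem_def by (auto simp: fun_eq_iff)
  then show ?case
    using chars_mult[OF m cochains_restrict[OF S f] u] insert by (simp add: j mult.commute)
qed

lemma chars_eq_prod_upper_elem:
  assumes S: "setting K dC G dG" and m: "m \<in> chars K G p" and f: "f \<in> cochains K G p"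
  shows "m f = (\<Prod>(n, x)\<in>{(n, x). x \<in> K n}. m (upper_elem n x (f n x)))"
proof -
  have "(\<lambda>n x. if (n, x) \<in> {(n, x). x \<in> K n} then f n x else 0) = f"
    using f by (auto simp: fun_eq_iff dest: cochainsD(2))
  then show ?thesis using chars_restrict_eq_prod[OF S m f setting_finite_cells[OF S] order_refl] by simp
qed

definition char_of_duals :: "(int \<Rightarrow> 'k set) \<Rightarrow> (int \<Rightarrow> 'g::ab_group_add set) \<Rightarrow> int \<Rightarrow>
   (int \<times> 'k \<Rightarrow> 'g \<Rightarrow> complex) \<Rightarrow> (('k,'g) cochain \<Rightarrow> complex)" where
  "char_of_duals K G p R =
     (\<lambda>f. if f \<in> cochains K G p then \<Prod>(n, x)\<in>{(n, x). x \<in> K n}. R (n, x) (f n x) else 1)"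

abbreviation dual_tuples :: "(int \<Rightarrow> 'k set) \<Rightarrow> (int \<Rightarrow> 'g::ab_group_add set) \<Rightarrow> int \<Rightarrow>
   (int \<times> 'k \<Rightarrow> 'g \<Rightarrow> complex) set" where
  "dual_tuples K G p \<equiv> PiE {(n, x). x \<in> K n} (\<lambda>(n, x). dual_grp G (n - p))"

lemma dual_tuplesD:
  "R \<in> dual_tuples K G p \<Longrightarrow> x \<in> K n \<Longrightarrow> R (n, x) \<in> dual_grp G (n - p)"
  by (drule PiE_mem[of R _ _ "(n, x)"]) auto

lemma char_of_duals_mem_chars:
  assumes S: "setting K dC G dG" and R: "R \<in> dual_tuples K G p"
  shows "char_of_duals K G p R \<in> chars K G p"
proof -
  let ?cells = "{(n, x). x \<in> K n}"
  have "cmod (\<Prod>(n, x)\<in>?cells. R (n, x) (f n x)) = 1" if f: "f \<in> cochains K G p" for f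
  proof -
    have "cmod (\<Prod>(n, x)\<in>?cells. R (n, x) (f n x)) = (\<Prod>(n, x)\<in>?cells. cmod (R (n, x) (f n x)))"
      by (simp add: prod_norm case_prod_unfold)
    also have "\<dots> = 1"
      using f by (intro prod.neutral) (auto simp: dual_grp_norm[OF dual_tuplesD[OF R]] cochainsD)
    finally show ?thesis .
  qed
  moreover have "(\<Prod>(n, x)\<in>?cells. R (n, x) (f n x + g n x))
      = (\<Prod>(n, x)\<in>?cells. R (n, x) (f n x)) * (\<Prod>(n, x)\<in>?cells. R (n, x) (g n x))"
    if "f \<in> cochains K G p" "g \<in> cochains K G p" for f g
    using that by (auto simp: prod.distrib[symmetric] intro!: prod.cong
        dual_grp_mult[OF dual_tuplesD[OF R]] dest: cochainsD)
  ultimately show ?thesis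
    unfolding chars_def char_of_duals_def by (auto simp: cochains_add[OF S])
qed

lemma char_of_duals_upper_elem:
  assumes S: "setting K dC G dG" and R: "R \<in> dual_tuples K G p"
    and x: "x \<in> K n" and g: "g \<in> G (n - p)"
  shows "char_of_duals K G p R (upper_elem n x g) = R (n, x) g"
proof -
  let ?cells = "{(n, x). x \<in> K n}"
  have nx: "(n, x) \<in> ?cells" using x by simp
  have "char_of_duals K G p R (upper_elem n x g)
      = (\<Prod>(n', x')\<in>?cells. R (n', x') (upper_elem n x g n' x'))"
    using upper_elem_mem_cochains[OF S x g] by (simp add: char_of_duals_def)
  also have "\<dots> = R (n, x) g * (\<Prod>(n', x')\<in>?cells - {(n, x)}. R (n', x') (upper_elem n x g n' x'))"
    by (simp add: prod.remove[OF setting_finite_cells[OF S] nx] upper_elem_def)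
  also have "(\<Prod>(n', x')\<in>?cells - {(n, x)}. R (n', x') (upper_elem n x g n' x')) = 1"
    by (intro prod.neutral) (auto simp: upper_elem_def dual_grp_zero[OF S dual_tuplesD[OF R]] split: if_splits)
  finally show ?thesis by simp
qed

lemma bij_betw_char_of_duals:
  assumes S: "setting K dC G dG"
  shows "bij_betw (char_of_duals K G p) (dual_tuples K G p) (chars K G p)"
  unfolding bij_betw_def
proof (intro conjI inj_onI equalityI subsetI)
  fix R R' assume R: "R \<in> dual_tuples K G p" and R': "R' \<in> dual_tuples K G p"
    and eq: "char_of_duals K G p R = char_of_duals K G p R'"
  show "R = R'"
  proof (rule PiE_ext[OF R R'], safe intro!: ext)
    fix n x g assume x: "x \<in> K n"
    show "R (n, x) g = R' (n, x) g"
      using char_of_duals_upper_elem[OF S R x] char_of_duals_upper_elem[OF S R' x] eq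
        dual_grp_outside[OF dual_tuplesD[OF R x]] dual_grp_outside[OF dual_tuplesD[OF R' x]]
      by (cases "g \<in> G (n - p)") auto
  qed
next
  fix m assume "m \<in> char_of_duals K G p ` dual_tuples K G p"
  then show "m \<in> chars K G p" using char_of_duals_mem_chars[OF S] by blast
next
  fix m assume m: "m \<in> chars K G p"
  let ?R = "\<lambda>(n, x)\<in>{(n, x). x \<in> K n}. \<lambda>g. if g \<in> G (n - p) then m (upper_elem n x g) else 1"
  have R: "?R \<in> dual_tuples K G p"
  proof (rule PiE_I)
    fix i assume "i \<in> {(n, x). x \<in> K n}"
    then obtain n x where i: "i = (n, x)" "x \<in> K n" by auto
    show "?R i \<in> (\<lambda>(n, x). dual_grp G (n - p)) i"
      unfolding dual_grp_def using i
      by (auto simp: upper_elem_add setting_add_mem[OF S] chars_norm[OF m] chars_mult[OF m]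
          upper_elem_mem_cochains[OF S])
  qed simp
  have "m = char_of_duals K G p ?R"
  proof
    fix f show "m f = char_of_duals K G p ?R f"
    proof (cases "f \<in> cochains K G p")
      case True
      then have "(\<Prod>(n, x)\<in>{(n, x). x \<in> K n}. m (upper_elem n x (f n x)))
          = (\<Prod>(n, x)\<in>{(n, x). x \<in> K n}. ?R (n, x) (f n x))"
        by (intro prod.cong) (auto dest: cochainsD)
      then show ?thesis
        using True chars_eq_prod_upper_elem[OF S m True] by (simp add: char_of_duals_def)
    qed (simp add: char_of_duals_def chars_outside[OF m])
  qed
  then show "m \<in> char_of_duals K G p ` dual_tuples K G p" by (rule rev_image_eqI[OF R])
qed

lemma sum_chars_mult_eq_prod:
  assumes S: "setting K dC G dG" and u: "u \<in> cochains K G p" and v: "v \<in> cochains K G p"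
  shows "(\<Sum>m\<in>chars K G p. m v * m u)
       = (\<Prod>(n, x)\<in>{(n, x). x \<in> K n}. \<Sum>r\<in>dual_grp G (n - p). r (v n x) * r (u n x))"
proof -
  let ?cells = "{(n, x). x \<in> K n}"
  have "(\<Sum>m\<in>chars K G p. m v * m u)
      = (\<Sum>R\<in>dual_tuples K G p. char_of_duals K G p R v * char_of_duals K G p R u)"
    by (rule sum.reindex_bij_betw[OF bij_betw_char_of_duals[OF S], symmetric])
  also have "\<dots> = (\<Sum>R\<in>dual_tuples K G p. \<Prod>i\<in>?cells. R i (v (fst i) (snd i)) * R i (u (fst i) (snd i)))"
    using u v by (simp add: char_of_duals_def prod.distrib case_prod_unfold)
  also have "\<dots> = (\<Prod>i\<in>?cells. \<Sum>r\<in>(\<lambda>(n, x). dual_grp G (n - p)) i.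
                     r (v (fst i) (snd i)) * r (u (fst i) (snd i)))"
    by (rule prod_sum_PiE[symmetric])
       (auto simp: setting_finite_cells[OF S] finite_dual_grp[OF S])
  finally show ?thesis by (simp add: case_prod_unfold)
qed

lemma op_prod_insert:
  assumes comm: "\<And>i j. i \<in> S \<Longrightarrow> j \<in> S \<Longrightarrow> Op i \<circ> Op j = Op j \<circ> Op i"
    and "finite I" "insert i I \<subseteq> S" "i \<notin> I"
  shows "op_prod (insert i I) Op = Op i \<circ> op_prod I Op"
proof -
  interpret comp_fun_commute_on S "\<lambda>i acc. Op i \<circ> acc"
    by unfold_locales (auto simp: fun_eq_iff dest: comm)
  show ?thesis unfolding op_prod_def using assms(2-4) by (simp add: fold_insert)
qed

lemma op_sum_Qop: "op_sum A c (\<lambda>a. Qop (m a)) \<psi> = (\<lambda>f. (\<Sum>a\<in>A. c a * m a f) * \<psi> f)"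
  unfolding op_sum_def Qop_def by (simp add: sum_distrib_right mult.assoc)

lemma op_prod_multiplication_ops:
  assumes Op: "\<And>i \<phi>. Op i \<phi> = (\<lambda>f. k i f * \<phi> f)" and "finite I"
  shows "op_prod I Op \<psi> = (\<lambda>f. (\<Prod>i\<in>I. k i f) * \<psi> f)"
  using assms(2)
proof (induction I rule: finite_induct)
  case empty
  then show ?case unfolding op_prod_def by simp
next
  case (insert j I)
  have "op_prod (insert j I) Op = Op j \<circ> op_prod I Op"
    using insert.hyps by (intro op_prod_insert[where S = UNIV]) (auto simp: fun_eq_iff Op)
  then have "op_prod (insert j I) Op \<psi> = Op j (op_prod I Op \<psi>)" by simp
  also have "\<dots> = (\<lambda>f. k j f * ((\<Prod>i\<in>I. k i f) * \<psi> f))" by (simp only: insert.IH Op)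
  finally show ?case using insert.hyps by (simp add: mult.assoc)
qed

lemma Pop_Pop: "Pop a (Pop b \<psi>) = Pop (\<lambda>n x. a n x + b n x) \<psi>"
  unfolding Pop_def by (simp add: diff_diff_eq)

lemma op_sums_Pop_commute:
  "op_sum A c (\<lambda>a. Pop (p a)) \<circ> op_sum B d (\<lambda>b. Pop (q b))
 = op_sum B d (\<lambda>b. Pop (q b)) \<circ> op_sum A c (\<lambda>a. Pop (p a))"
proof (intro ext)
  fix \<psi> f
  have "(\<Sum>a\<in>A. \<Sum>b\<in>B. c a * d b * \<psi> (\<lambda>n x. f n x - p a n x - q b n x))
      = (\<Sum>b\<in>B. \<Sum>a\<in>A. d b * c a * \<psi> (\<lambda>n x. f n x - q b n x - p a n x))"
    by (subst sum.swap) (simp add: mult.commute diff_right_commute)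
  then show "(op_sum A c (\<lambda>a. Pop (p a)) \<circ> op_sum B d (\<lambda>b. Pop (q b))) \<psi> f
      = (op_sum B d (\<lambda>b. Pop (q b)) \<circ> op_sum A c (\<lambda>a. Pop (p a))) \<psi> f"
    unfolding op_sum_def Pop_def by (simp add: sum_distrib_left mult.assoc)
qed

lemma op_sum_Pop_op_sum:
  "op_sum A c (\<lambda>a. Pop (p a)) (op_sum B d Op \<psi>)
 = op_sum (A \<times> B) (\<lambda>(a, b). c a * d b) (\<lambda>(a, b). Pop (p a) \<circ> Op b) \<psi>"
proof
  fix f
  have "op_sum (A \<times> B) (\<lambda>(a, b). c a * d b) (\<lambda>(a, b). Pop (p a) \<circ> Op b) \<psi> f
      = (\<Sum>(a, b)\<in>A \<times> B. c a * d b * Op b \<psi> (\<lambda>n x. f n x - p a n x))"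
    unfolding op_sum_def Pop_def by (intro sum.cong) auto
  also have "\<dots> = (\<Sum>a\<in>A. \<Sum>b\<in>B. c a * d b * Op b \<psi> (\<lambda>n x. f n x - p a n x))"
    by (rule sum.cartesian_product[symmetric])
  also have "\<dots> = op_sum A c (\<lambda>a. Pop (p a)) (op_sum B d Op \<psi>) f"
    unfolding op_sum_def Pop_def by (simp add: sum_distrib_left mult.assoc)
  finally show "op_sum A c (\<lambda>a. Pop (p a)) (op_sum B d Op \<psi>) f
      = op_sum (A \<times> B) (\<lambda>(a, b). c a * d b) (\<lambda>(a, b). Pop (p a) \<circ> Op b) \<psi> f" ..
qed

lemma op_sum_reindex_bij_betw:
  assumes "bij_betw h A B"
  shows "op_sum A (\<lambda>a. c (h a)) (\<lambda>a. Op (h a)) = op_sum B c Op"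
  unfolding op_sum_def by (intro ext sum.reindex_bij_betw[OF assms])

definition supported_cochains ::
  "(int \<Rightarrow> 'k set) \<Rightarrow> (int \<Rightarrow> 'g::zero set) \<Rightarrow> int \<Rightarrow> (int \<times> 'k) set \<Rightarrow> ('k,'g) cochain set" where
  "supported_cochains K G p I = {t \<in> cochains K G p. \<forall>n x. (n, x) \<notin> I \<longrightarrow> t n x = 0}"

lemma supported_cochains_empty:
  assumes "setting K dC G dG" shows "supported_cochains K G p {} = {\<lambda>n x. 0}"
  unfolding supported_cochains_def using cochains_zero[OF assms] by (auto simp: fun_eq_iff)

lemma supported_cochains_cells: "supported_cochains K G p {(n, x). x \<in> K n} = cochains K G p"
  unfolding supported_cochains_def by (auto dest: cochainsD(2))

lemma bij_betw_supported_cochains_insert: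
  assumes S: "setting K dC G dG" and x0: "x0 \<in> K n0" and new: "(n0, x0) \<notin> I"
  shows "bij_betw (\<lambda>(g, t). (\<lambda>n x. upper_elem n0 x0 g n x + t n x))
           (G (n0 - p) \<times> supported_cochains K G p I) (supported_cochains K G p (insert (n0, x0) I))"
proof (rule bij_betw_byWitness[where f' = "\<lambda>t'. (t' n0 x0, \<lambda>n x. if (n, x) = (n0, x0) then 0 else t' n x)"])
  show "(\<lambda>(g, t). (\<lambda>n x. upper_elem n0 x0 g n x + t n x)) ` (G (n0 - p) \<times> supported_cochains K G p I)
        \<subseteq> supported_cochains K G p (insert (n0, x0) I)"
    using cochains_add[OF S upper_elem_mem_cochains[OF S x0]]
    by (auto simp: supported_cochains_def upper_elem_def)
  show "(\<lambda>t'. (t' n0 x0, \<lambda>n x. if (n, x) = (n0, x0) then 0 else t' n x))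
          ` supported_cochains K G p (insert (n0, x0) I) \<subseteq> G (n0 - p) \<times> supported_cochains K G p I"
    using x0 by (auto simp: supported_cochains_def intro!: cochainsI setting_zero_mem[OF S]
        dest: cochainsD)
qed (use new in \<open>auto simp: supported_cochains_def upper_elem_def fun_eq_iff\<close>)

subsection \<open>The two factorizations\<close>

lemma Aop_add:
  assumes "setting K dC G dG" "u \<in> cochains K G (-1)" "t \<in> cochains K G (-1)"
  shows "Aop K dC dG (\<lambda>n x. u n x + t n x) \<psi> = Aop K dC dG u (Aop K dC dG t \<psi>)"
  unfolding Aop_def Pop_Pop cobdry_add[OF assms] ..

lemma op_prod_A_sums_supported:
  assumes S: "setting K dC G dG" and s: "s \<in> chars K G (-1)"
    and "finite I" "I \<subseteq> {(n, x). x \<in> K n}"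
  shows "op_prod I (\<lambda>(n, x). op_sum (G (n + 1)) (\<lambda>g. s (upper_elem n x g))
                                      (\<lambda>g. Aop K dC dG (upper_elem n x g))) \<psi>
    = op_sum (supported_cochains K G (-1) I) s (Aop K dC dG) \<psi>"
  using assms(3,4)
proof (induction I rule: finite_induct)
  case empty
  show ?case unfolding op_prod_def
    by (simp add: supported_cochains_empty[OF S] chars_zero[OF S s] cobdry_zero[OF S]
        op_sum_def Aop_def Pop_def)
next
  case (insert j I)
  let ?A = "\<lambda>(n, x). op_sum (G (n + 1)) (\<lambda>g. s (upper_elem n x g)) (\<lambda>g. Aop K dC dG (upper_elem n x g))"
  obtain n0 x0 where j: "j = (n0, x0)" by (cases j)
  let ?u = "upper_elem n0 x0"
  let ?h = "\<lambda>(g, t). (\<lambda>n x. ?u g n x + t n x)"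
  have x0: "x0 \<in> K n0" using insert.prems j by auto
  have "?A i \<circ> ?A i' = ?A i' \<circ> ?A i" for i i'
    unfolding Aop_def by (cases i; cases i') (simp only: case_prod_conv, rule op_sums_Pop_commute)
  then have "op_prod (insert j I) ?A = ?A j \<circ> op_prod I ?A"
    using insert.hyps by (intro op_prod_insert[where S = UNIV]) auto
  then have "op_prod (insert j I) ?A \<psi>
      = op_sum (G (n0 + 1)) (\<lambda>g. s (?u g)) (\<lambda>g. Aop K dC dG (?u g))
          (op_sum (supported_cochains K G (-1) I) s (Aop K dC dG) \<psi>)"
    using insert by (simp add: j)
  also have "\<dots> = op_sum (G (n0 + 1) \<times> supported_cochains K G (-1) I)
      (\<lambda>(g, t). s (?u g) * s t) (\<lambda>(g, t). Aop K dC dG (?u g) \<circ> Aop K dC dG t) \<psi>"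
    unfolding Aop_def by (rule op_sum_Pop_op_sum)
  also have "\<dots> = op_sum (G (n0 + 1) \<times> supported_cochains K G (-1) I)
      (\<lambda>a. s (?h a)) (\<lambda>a. Aop K dC dG (?h a)) \<psi>"
    unfolding op_sum_def using x0
    by (intro ext sum.cong) (auto simp: supported_cochains_def chars_mult[OF s] Aop_add[OF S]
        upper_elem_mem_cochains[OF S])
  also have "\<dots> = op_sum (supported_cochains K G (-1) (insert j I)) s (Aop K dC dG) \<psi>"
    using op_sum_reindex_bij_betw[OF bij_betw_supported_cochains_insert[OF S x0, of I "-1"],
        of s "Aop K dC dG"] insert.hyps
    by (simp add: j)
  finally show ?case .
qed

lemma A_sum_factorization:
  assumes "setting K dC G dG" "s \<in> chars K G (-1)"
  shows "op_sum (cochains K G (-1)) (\<lambda>t. s t) (Aop K dC dG) \<psi>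
       = op_prod {(n, x). x \<in> K n}
           (\<lambda>(n, x). op_sum (G (n + 1)) (\<lambda>g. s (upper_elem n x g))
                               (\<lambda>g. Aop K dC dG (upper_elem n x g))) \<psi>"
  using op_prod_A_sums_supported[OF assms setting_finite_cells[OF assms(1)] order_refl]
  by (simp add: supported_cochains_cells)

lemma B_sum_factorization:
  assumes S: "setting K dC G dG" and v: "v \<in> cochains K G 1" and \<psi>: "\<psi> \<in> Hspace K G"
  shows "op_sum (chars K G 1) (\<lambda>m. m v) (Bop K dC G dG) \<psi>
       = op_prod {(n, x). x \<in> K n}
           (\<lambda>(n, x). op_sum (dual_grp G (n - 1)) (\<lambda>r. lower_elem K G 1 n x r v)
                               (\<lambda>r. Bop K dC G dG (lower_elem K G 1 n x r))) \<psi>"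
proof -
  let ?cells = "{(n, x). x \<in> K n}"
  let ?factor = "\<lambda>(n, x) f. \<Sum>r\<in>dual_grp G (n - 1).
      lower_elem K G 1 n x r v * dual_cobdry K dC G dG (lower_elem K G 1 n x r) f"
  have Bop_eq: "Bop K dC G dG = (\<lambda>m. Qop (dual_cobdry K dC G dG m))"
    by (simp add: Bop_def fun_eq_iff)
  have "(\<Sum>m\<in>chars K G 1. m v * dual_cobdry K dC G dG m f) = (\<Prod>i\<in>?cells. ?factor i f)"
    if f: "f \<in> cochains K G 0" for f
    using f sum_chars_mult_eq_prod[OF S cobdry_mem_cochains[OF S f] v]
      cobdry_mem_cochains[OF S f] v
    by (simp add: dual_cobdry_def lower_elem_def case_prod_unfold)
  moreover have "\<psi> f = 0" if "f \<notin> cochains K G 0" for f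
    using \<psi> that unfolding Hspace_def by blast
  ultimately show ?thesis
    by (subst op_prod_multiplication_ops[where k = ?factor])
       (auto simp: Bop_eq op_sum_Qop setting_finite_cells[OF S] fun_eq_iff split: prod.split)
qed

theorem proposition12:
  fixes K :: "int \<Rightarrow> 'k set" and dC :: "int \<Rightarrow> 'k \<Rightarrow> 'k \<Rightarrow> int"
    and G :: "int \<Rightarrow> 'g::ab_group_add set" and dG :: "int \<Rightarrow> 'g \<Rightarrow> 'g"
    and s :: "('k,'g) cochain \<Rightarrow> complex" and v :: "('k,'g) cochain"
  assumes "setting K dC G dG"
    and "s \<in> chars K G (-1)"
    and "v \<in> cochains K G 1"
  shows "(\<forall>\<psi>\<in>Hspace K G.
           op_sum (cochains K G (-1)) (\<lambda>t. s t) (Aop K dC dG) \<psi>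
         = op_prod {(n, x). x \<in> K n}
             (\<lambda>(n, x). op_sum (G (n + 1)) (\<lambda>g. s (upper_elem n x g))
                                 (\<lambda>g. Aop K dC dG (upper_elem n x g))) \<psi>)
    \<and> (\<forall>\<psi>\<in>Hspace K G.
           op_sum (chars K G 1) (\<lambda>m. m v) (Bop K dC G dG) \<psi>
         = op_prod {(n, x). x \<in> K n}
             (\<lambda>(n, x). op_sum (dual_grp G (n - 1)) (\<lambda>r. lower_elem K G 1 n x r v)
                                 (\<lambda>r. Bop K dC G dG (lower_elem K G 1 n x r))) \<psi>)"
  using A_sum_factorization[OF assms(1,2)] B_sum_factorization[OF assms(1,3)] by blast

end
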